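(* Let $u,v\in\mathbb{Z}[i]$ with $\gcd(u,v)\in U$ and $uv\equiv0\pmod{1+i}$. Then there exist $x,y\in\mathbb{Z}[i]$ with $\gcd(x,y)\in U$ satisfying $x-y=u+v$ and $xy=iuv$ if and only if the quadratic equation $z^2-(u+v)z-iuv=0$ has a solution $z\in\mathbb{Z}[i]$.
   Context: $\mathbb{Z}[i]$ is the ring of Gaussian integers, $U=\{1,-1,i,-i\}$ its unit group. $\gcd(x,y)\in U$ means $x,y$ have no common non-unit divisor. *)

theory Defs
  imports Complex_Main
begin

definition gauss_ints :: "complex set" where
  "gauss_ints = {z. Re z \<in> \<int> \<and> Im z \<in> \<int>}"

definition gdvd :: "complex \<Rightarrow> complex \<Rightarrow> bool" where
  "gdvd a b \<longleftrightarrow> (\<exists>c\<in>gauss_ints. b = a * c)"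

definition gunits :: "complex set" where
  "gunits = {1, -1, \<i>, -\<i>}"

text \<open>gcd(x,y) in U: x and y have no common non-unit divisor in Z[i].\<close>
definition gcoprime :: "complex \<Rightarrow> complex \<Rightarrow> bool" where
  "gcoprime x y \<longleftrightarrow> (\<forall>d\<in>gauss_ints. gdvd d x \<and> gdvd d y \<longrightarrow> d \<in> gunits)"

end

theory Submission
  imports Defs
begin

text \<open>
  If \<open>x - y = u + v\<close> and \<open>x y = i u v\<close>, then \<open>x\<close> is a root of
  \<open>z\<^sup>2 - (u + v) z - i u v\<close>; conversely a root \<open>z\<close> yields \<open>x = z\<close>,
  \<open>y = z - (u + v)\<close>. Coprimality of \<open>x\<close> and \<open>y\<close> comes for free: a common divisor
  \<open>d\<close> divides \<open>u + v\<close> and \<open>u v\<close>, hence \<open>u\<^sup>2\<close> and \<open>v\<^sup>2\<close>. As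
  \<open>\<int>[i]\<close> is Euclidean, \<open>a u + b v = 1\<close> for some \<open>a, b\<close> (a nonzero combination of
  least norm divides \<open>u\<close> and \<open>v\<close>), so \<open>d\<close> divides \<open>(a u + b v)\<^sup>2 = 1\<close>.
\<close>

lemma gauss_ints_iff: "z \<in> gauss_ints \<longleftrightarrow> Re z \<in> \<int> \<and> Im z \<in> \<int>"
  by (simp add: gauss_ints_def)

lemma gauss_ints_add [intro]: "a \<in> gauss_ints \<Longrightarrow> b \<in> gauss_ints \<Longrightarrow> a + b \<in> gauss_ints"
  and gauss_ints_diff [intro]: "a \<in> gauss_ints \<Longrightarrow> b \<in> gauss_ints \<Longrightarrow> a - b \<in> gauss_ints"
  and gauss_ints_mult [intro]: "a \<in> gauss_ints \<Longrightarrow> b \<in> gauss_ints \<Longrightarrow> a * b \<in> gauss_ints"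
  and gauss_ints_uminus [intro]: "a \<in> gauss_ints \<Longrightarrow> - a \<in> gauss_ints"
  by (simp_all add: gauss_ints_iff)

lemma gauss_ints_0 [simp, intro]: "0 \<in> gauss_ints"
  and gauss_ints_1 [simp, intro]: "1 \<in> gauss_ints"
  and gauss_ints_imaginary_unit [simp, intro]: "\<i> \<in> gauss_ints"
  by (simp_all add: gauss_ints_iff)

lemma gdvd_add: "gdvd d a \<Longrightarrow> gdvd d b \<Longrightarrow> gdvd d (a + b)"
  and gdvd_diff: "gdvd d a \<Longrightarrow> gdvd d b \<Longrightarrow> gdvd d (a - b)"
  unfolding gdvd_def by (metis gauss_ints_add distrib_left, metis gauss_ints_diff right_diff_distrib)

lemma gdvd_mult_left: "c \<in> gauss_ints \<Longrightarrow> gdvd d a \<Longrightarrow> gdvd d (c * a)"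
  unfolding gdvd_def by (metis gauss_ints_mult mult.left_commute)

text \<open>The norm is taken \<open>nat\<close>-valued so that least elements exist; the floors are exact on
  \<open>\<int>[i]\<close>.\<close>
definition gauss_norm :: "complex \<Rightarrow> nat" where
  "gauss_norm z = nat (\<lfloor>Re z\<rfloor>\<^sup>2 + \<lfloor>Im z\<rfloor>\<^sup>2)"

lemma of_nat_gauss_norm:
  assumes "z \<in> gauss_ints"
  shows "real (gauss_norm z) = (cmod z)\<^sup>2"
proof -
  obtain a b :: int where "Re z = of_int a" "Im z = of_int b"
    using assms by (auto simp: gauss_ints_iff elim!: Ints_cases)
  then show ?thesis
    by (simp add: gauss_norm_def cmod_power2)
qed

lemma gauss_norm_mult:
  assumes "a \<in> gauss_ints" "b \<in> gauss_ints"
  shows "gauss_norm (a * b) = gauss_norm a * gauss_norm b"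
  using of_nat_gauss_norm[of a] of_nat_gauss_norm[of b] of_nat_gauss_norm[of "a * b"] assms
  by (metis gauss_ints_mult norm_mult of_nat_eq_iff of_nat_mult power_mult_distrib)

lemma gauss_norm_eq_1_imp_unit:
  assumes "z \<in> gauss_ints" and "gauss_norm z = 1"
  shows "z \<in> gunits"
proof -
  obtain a b :: int where re: "Re z = of_int a" and im: "Im z = of_int b"
    using assms(1) by (auto simp: gauss_ints_iff elim!: Ints_cases)
  then have ab: "a\<^sup>2 + b\<^sup>2 = 1"
    using assms(2) by (simp add: gauss_norm_def)
  then have "a\<^sup>2 \<le> 1" "b\<^sup>2 \<le> 1"
    using zero_le_power2[of a] zero_le_power2[of b] by linarith+
  then have "a \<in> {-1, 0, 1}" "b \<in> {-1, 0, 1}"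
    unfolding abs_square_le_1 by auto
  with ab have "(a, b) \<in> {(1, 0), (-1, 0), (0, 1), (0, -1)}"
    by auto
  with re im show ?thesis
    by (auto simp: gunits_def complex_eq_iff)
qed

lemma gdvd_1_imp_unit:
  assumes "d \<in> gauss_ints" and "gdvd d 1"
  shows "d \<in> gunits"
proof -
  obtain c where "c \<in> gauss_ints" and "1 = d * c"
    using assms(2) by (auto simp: gdvd_def)
  then have "gauss_norm d * gauss_norm c = 1"
    using assms(1) by (metis gauss_norm_mult gauss_ints_1 of_nat_gauss_norm norm_one one_power2 of_nat_eq_1_iff)
  then show ?thesis
    using assms(1) gauss_norm_eq_1_imp_unit by simp
qed

lemma gauss_ints_division:
  assumes "g \<in> gauss_ints" "g \<noteq> 0" "t \<in> gauss_ints"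
  shows "\<exists>q\<in>gauss_ints. gauss_norm (t - q * g) < gauss_norm g"
proof -
  define w where "w = t / g"
  define q where "q = Complex (of_int (round (Re w))) (of_int (round (Im w)))"
  have q: "q \<in> gauss_ints"
    by (simp add: q_def gauss_ints_iff)
  have "\<bar>Re (w - q)\<bar> \<le> 1/2" "\<bar>Im (w - q)\<bar> \<le> 1/2"
    using of_int_round_abs_le[of "Re w"] of_int_round_abs_le[of "Im w"]
    by (simp_all add: q_def abs_minus_commute)
  then have "(Re (w - q))\<^sup>2 \<le> (1/2)\<^sup>2" "(Im (w - q))\<^sup>2 \<le> (1/2)\<^sup>2"
    by (metis abs_ge_zero power2_abs power_mono)+
  then have "(cmod (w - q))\<^sup>2 < 1"
    unfolding cmod_power2 by (simp add: power2_eq_square)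
  then have "(cmod (w - q))\<^sup>2 * (cmod g)\<^sup>2 < (cmod g)\<^sup>2"
    using assms(2) by simp
  moreover have "t - q * g = (w - q) * g"
    using assms(2) by (simp add: w_def field_simps)
  ultimately have "(cmod (t - q * g))\<^sup>2 < (cmod g)\<^sup>2"
    by (simp add: norm_mult power_mult_distrib)
  moreover have "t - q * g \<in> gauss_ints"
    using q assms by blast
  ultimately show ?thesis
    using q assms(1) by (metis of_nat_gauss_norm of_nat_less_iff)
qed

definition gauss_lincombs :: "complex \<Rightarrow> complex \<Rightarrow> complex set" where
  "gauss_lincombs u v = {a * u + b * v | a b. a \<in> gauss_ints \<and> b \<in> gauss_ints}"

lemma gauss_lincombsI: "a \<in> gauss_ints \<Longrightarrow> b \<in> gauss_ints \<Longrightarrow> a * u + b * v \<in> gauss_lincombs u v"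
  by (auto simp: gauss_lincombs_def)

lemma gauss_lincombsE:
  assumes "w \<in> gauss_lincombs u v"
  obtains a b where "a \<in> gauss_ints" "b \<in> gauss_ints" "w = a * u + b * v"
  using assms by (auto simp: gauss_lincombs_def)

lemma gauss_lincombs_subset: "u \<in> gauss_ints \<Longrightarrow> v \<in> gauss_ints \<Longrightarrow> gauss_lincombs u v \<subseteq> gauss_ints"
  by (auto elim: gauss_lincombsE)

lemma gauss_lincombs_generators: "u \<in> gauss_lincombs u v" "v \<in> gauss_lincombs u v"
  using gauss_lincombsI[of 1 0 u v] gauss_lincombsI[of 0 1 u v] by simp_all

lemma gauss_lincombs_diff_mult:
  assumes "s \<in> gauss_lincombs u v" "t \<in> gauss_lincombs u v" "q \<in> gauss_ints"
  shows "t - q * s \<in> gauss_lincombs u v"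
proof -
  obtain a b where a: "a \<in> gauss_ints" and b: "b \<in> gauss_ints" and s: "s = a * u + b * v"
    using assms(1) by (rule gauss_lincombsE)
  obtain c e where c: "c \<in> gauss_ints" and e: "e \<in> gauss_ints" and t: "t = c * u + e * v"
    using assms(2) by (rule gauss_lincombsE)
  have "t - q * s = (c - q * a) * u + (e - q * b) * v"
    by (simp add: s t algebra_simps)
  also have "\<dots> \<in> gauss_lincombs u v"
    using a b c e assms(3) by (intro gauss_lincombsI) auto
  finally show ?thesis .
qed

lemma gdvd_lincomb_if_least_gauss_norm:
  assumes "u \<in> gauss_ints" "v \<in> gauss_ints"
    and g: "g \<in> gauss_lincombs u v" "g \<noteq> 0"
    and g_least: "\<And>w. w \<in> gauss_lincombs u v \<Longrightarrow> w \<noteq> 0 \<Longrightarrow> gauss_norm g \<le> gauss_norm w"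
    and t: "t \<in> gauss_lincombs u v"
  shows "gdvd g t"
proof -
  have "g \<in> gauss_ints" "t \<in> gauss_ints"
    using gauss_lincombs_subset[OF assms(1,2)] g(1) t by blast+
  then obtain q where q: "q \<in> gauss_ints" and less: "gauss_norm (t - q * g) < gauss_norm g"
    using gauss_ints_division g(2) by blast
  have "t - q * g \<in> gauss_lincombs u v"
    using g(1) t q by (rule gauss_lincombs_diff_mult)
  have "t - q * g = 0"
  proof (rule ccontr)
    assume "t - q * g \<noteq> 0"
    with g_least[OF \<open>t - q * g \<in> gauss_lincombs u v\<close>] less show False
      by simp
  qed
  then have "t = g * q"
    by (simp add: algebra_simps)
  with q show ?thesis
    by (auto simp: gdvd_def)
qed

lemma gcoprime_imp_nonzero:
  assumes "gcoprime u v"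
  shows "u \<noteq> 0 \<or> v \<noteq> 0"
proof (rule ccontr)
  assume "\<not> (u \<noteq> 0 \<or> v \<noteq> 0)"
  then have "gdvd 0 u" "gdvd 0 v"
    by (auto simp: gdvd_def)
  with assms have "0 \<in> gunits"
    by (auto simp: gcoprime_def)
  then show False
    by (simp add: gunits_def)
qed

lemma gauss_bezout:
  assumes "u \<in> gauss_ints" "v \<in> gauss_ints" "gcoprime u v"
  shows "\<exists>a\<in>gauss_ints. \<exists>b\<in>gauss_ints. a * u + b * v = 1"
proof -
  let ?L = "gauss_lincombs u v"
  have "\<exists>w. w \<in> ?L \<and> w \<noteq> 0"
    using gcoprime_imp_nonzero[OF assms(3)] gauss_lincombs_generators by blast
  then obtain g where g: "g \<in> ?L" "g \<noteq> 0"
    and g_least: "\<And>w. w \<in> ?L \<Longrightarrow> w \<noteq> 0 \<Longrightarrow> gauss_norm g \<le> gauss_norm w"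
    using ex_has_least_nat[of "\<lambda>w. w \<in> ?L \<and> w \<noteq> 0" _ gauss_norm] by blast
  have g_int: "g \<in> gauss_ints"
    using gauss_lincombs_subset[OF assms(1,2)] g(1) by blast
  have "gdvd g u" "gdvd g v"
    using gdvd_lincomb_if_least_gauss_norm[OF assms(1,2) g g_least] gauss_lincombs_generators
    by blast+
  with assms(3) g_int have "g \<in> gunits"
    unfolding gcoprime_def by blast
  then have "cnj g * g = 1"
    by (auto simp: gunits_def complex_eq_iff)
  moreover obtain a b where "a \<in> gauss_ints" "b \<in> gauss_ints" "g = a * u + b * v"
    using g(1) by (rule gauss_lincombsE)
  ultimately have "(cnj g * a) * u + (cnj g * b) * v = 1"
    by (simp add: algebra_simps)
  moreover have "cnj g \<in> gauss_ints"
    using g_int by (simp add: gauss_ints_iff)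
  ultimately show ?thesis
    using \<open>a \<in> gauss_ints\<close> \<open>b \<in> gauss_ints\<close> by blast
qed

lemma gcoprime_common_divisor_of_sum_and_prod:
  assumes "u \<in> gauss_ints" "v \<in> gauss_ints" "gcoprime u v"
    and "d \<in> gauss_ints" "gdvd d (u + v)" "gdvd d (u * v)"
  shows "d \<in> gunits"
proof -
  obtain a b where ab: "a \<in> gauss_ints" "b \<in> gauss_ints" "a * u + b * v = 1"
    using gauss_bezout assms(1-3) by blast
  have du: "gdvd d (u\<^sup>2)"
    using gdvd_diff[OF gdvd_mult_left[OF assms(1,5)] assms(6)]
    by (simp add: power2_eq_square algebra_simps)
  have dv: "gdvd d (v\<^sup>2)"
    using gdvd_diff[OF gdvd_mult_left[OF assms(2,5)] assms(6)]
    by (simp add: power2_eq_square algebra_simps)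
  have "gdvd d ((a * a) * u\<^sup>2 + (a * b + a * b) * (u * v) + (b * b) * v\<^sup>2)"
    using ab(1,2) by (intro gdvd_add gdvd_mult_left[OF _ du] gdvd_mult_left[OF _ assms(6)]
        gdvd_mult_left[OF _ dv]) blast+
  also have "(a * a) * u\<^sup>2 + (a * b + a * b) * (u * v) + (b * b) * v\<^sup>2 = (a * u + b * v)\<^sup>2"
    by (simp add: power2_eq_square algebra_simps)
  finally have "gdvd d 1"
    by (simp add: ab(3))
  with assms(4) show ?thesis
    by (rule gdvd_1_imp_unit)
qed

lemma gcoprime_if_diff_and_prod:
  assumes "u \<in> gauss_ints" "v \<in> gauss_ints" "gcoprime u v" "x \<in> gauss_ints"
    and "x - y = u + v" "x * y = \<i> * u * v"
  shows "gcoprime x y"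
  unfolding gcoprime_def
proof (intro ballI impI)
  fix d assume d: "d \<in> gauss_ints" and "gdvd d x \<and> gdvd d y"
  then have "gdvd d (x - y)"
    by (blast intro: gdvd_diff)
  moreover have "gdvd d ((- \<i> * x) * y)"
    using assms(4) \<open>gdvd d x \<and> gdvd d y\<close> by (intro gdvd_mult_left) blast+
  moreover have "(- \<i> * x) * y = u * v"
    using assms(6) by (simp add: algebra_simps)
  ultimately show "d \<in> gunits"
    using gcoprime_common_divisor_of_sum_and_prod[OF assms(1-3) d] assms(5) by simp
qed

lemma quadratic_eq_0_iff_mult_eq:
  fixes z s p :: "'a :: comm_ring_1"
  shows "z\<^sup>2 - s * z - p = 0 \<longleftrightarrow> z * (z - s) = p"
  by (simp add: power2_eq_square right_diff_distrib mult.commute flip: eq_iff_diff_eq_0)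

theorem proposition4p21:
  fixes u v :: complex
  assumes "u \<in> gauss_ints" and "v \<in> gauss_ints"
    and "gcoprime u v"
    and "gdvd (1 + \<i>) (u * v)"
  shows "(\<exists>x\<in>gauss_ints. \<exists>y\<in>gauss_ints.
            gcoprime x y \<and> x - y = u + v \<and> x * y = \<i> * u * v)
         \<longleftrightarrow> (\<exists>z\<in>gauss_ints. z ^ 2 - (u + v) * z - \<i> * u * v = 0)"
proof
  assume "\<exists>x\<in>gauss_ints. \<exists>y\<in>gauss_ints.
            gcoprime x y \<and> x - y = u + v \<and> x * y = \<i> * u * v"
  then obtain x y where x: "x \<in> gauss_ints" and diff: "x - y = u + v"
    and prod: "x * y = \<i> * u * v"
    by blast
  have "x * (x - (u + v)) = \<i> * u * v"
    by (simp add: prod flip: diff)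
  then have "x ^ 2 - (u + v) * x - \<i> * u * v = 0"
    by (simp only: quadratic_eq_0_iff_mult_eq)
  with x show "\<exists>z\<in>gauss_ints. z ^ 2 - (u + v) * z - \<i> * u * v = 0" ..
next
  assume "\<exists>z\<in>gauss_ints. z ^ 2 - (u + v) * z - \<i> * u * v = 0"
  then obtain z where z: "z \<in> gauss_ints" and "z ^ 2 - (u + v) * z - \<i> * u * v = 0"
    by blast
  then have prod: "z * (z - (u + v)) = \<i> * u * v"
    by (simp only: quadratic_eq_0_iff_mult_eq)
  have diff: "z - (z - (u + v)) = u + v"
    by simp
  have "z - (u + v) \<in> gauss_ints"
    using z assms(1,2) by (intro gauss_ints_diff gauss_ints_add)
  moreover have "gcoprime z (z - (u + v))"
    using assms(1-3) z diff prod by (rule gcoprime_if_diff_and_prod)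
  ultimately show "\<exists>x\<in>gauss_ints. \<exists>y\<in>gauss_ints.
            gcoprime x y \<and> x - y = u + v \<and> x * y = \<i> * u * v"
    using z diff prod by blast
qed

end
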